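(* Let $\alpha\ge5$ and $g_\alpha(y)=\sum_{k,l\in\mathbb{Z}}\exp\!\big(-\tfrac{\pi\alpha}{y}(k^2+kl+(\tfrac14+y^2)l^2)\big)\cos\big(2\pi(ka_2(y)-la_1(y))\big)$ with $a_1(y)=\tfrac14+\tfrac1{16y^2}$, $a_2(y)=\tfrac12-\tfrac1{8y^2}$. Then $g_\alpha''(y)<0$ for all $y\in\big[\tfrac{\sqrt3}2,\tfrac{\sqrt3}2+\tfrac1{4\sqrt\alpha}\big]$. *)

theory Defs
  imports "HOL-Analysis.Analysis"
begin

definition a1 :: "real \<Rightarrow> real" where
  "a1 y = 1/4 + 1/(16 * y^2)"

definition a2 :: "real \<Rightarrow> real" where
  "a2 y = 1/2 - 1/(8 * y^2)"

text \<open>The lattice theta-type sum over (k,l) in Z x Z (absolutely convergent for y > 0, alpha > 0).\<close>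
definition g :: "real \<Rightarrow> real \<Rightarrow> real" where
  "g \<alpha> y = (\<Sum>\<^sub>\<infinity>(k,l)\<in>(UNIV :: (int \<times> int) set).
      exp (- (pi * \<alpha> / y) * (real_of_int k ^ 2 + real_of_int k * real_of_int l
                                + (1/4 + y^2) * real_of_int l ^ 2))
      * cos (2 * pi * (real_of_int k * a2 y - real_of_int l * a1 y)))"

end

theory Submission
  imports Defs
begin

(* Write x = pi * alpha. The (k, l) summand of g is exp (-x Q) cos phi with
   Q = (k + l/2)^2 / y + y l^2 and phi = 2 pi (k a2(y) - l a1(y)). Near y = 1 we have
   Q >= (|k| + |l|) / 3, so the series and its first two termwise derivatives are dominated
   by multiples of exp (-|k| - |l|) and g'' is the sum of the second derivatives.
   For sqrt 3 / 2 <= y <= 1 (the upper bound on y is only used through y <= 1) the origin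
   contributes 0, each of (1, 0) and (-1, 0) contributes at most -(x^2/4) exp (-x/y), and the
   four other neighbours (0, 1), (0, -1), (-1, 1), (1, -1) contribute non-positively: for them
   cos phi = - sin (pi / (8 y^2)) <= 0 and phi' sin phi <= 0. Every other lattice point has
   Q >= 3, so together they contribute at most (9/100) x^2 exp (-x/y). *)

section \<open>Termwise differentiation of dominated sums\<close>

lemma summable_on_dominated:
  fixes f :: "'a \<Rightarrow> real"
  assumes "M summable_on A" "\<And>x. x \<in> A \<Longrightarrow> \<bar>f x\<bar> \<le> M x"
  shows "f summable_on A"
proof -
  have "(\<lambda>x. norm (f x)) summable_on A"
    by (rule summable_on_comparison_test[OF assms(1)]) (use assms(2) in auto)
  then show ?thesis
    by (rule abs_summable_summable)
qed

lemma sums_infsum_reindex: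
  fixes f :: "'a \<Rightarrow> real"
  assumes "bij_betw h UNIV I" "f summable_on I"
  shows "(\<lambda>n. f (h n)) sums (\<Sum>\<^sub>\<infinity>i\<in>I. f i)"
  using assms has_sum_imp_sums has_sum_reindex_bij_betw summable_iff_has_sum_infsum by blast

lemma has_real_derivative_infsum:
  fixes F F' :: "'a \<Rightarrow> real \<Rightarrow> real" and M M' :: "'a \<Rightarrow> real"
  assumes I: "countable I"
    and S: "open S" "convex S" "y \<in> S"
    and deriv: "\<And>i z. i \<in> I \<Longrightarrow> z \<in> S \<Longrightarrow> (F i has_real_derivative F' i z) (at z)"
    and bound: "\<And>i z. i \<in> I \<Longrightarrow> z \<in> S \<Longrightarrow> \<bar>F i z\<bar> \<le> M i" "M summable_on I"
    and bound': "\<And>i z. i \<in> I \<Longrightarrow> z \<in> S \<Longrightarrow> \<bar>F' i z\<bar> \<le> M' i" "M' summable_on I"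
  shows "((\<lambda>z. \<Sum>\<^sub>\<infinity>i\<in>I. F i z) has_real_derivative (\<Sum>\<^sub>\<infinity>i\<in>I. F' i y)) (at y)"
proof (cases "finite I")
  case True
  then have "((\<lambda>z. \<Sum>i\<in>I. F i z) has_real_derivative (\<Sum>i\<in>I. F' i y)) (at y)"
    by (intro DERIV_sum deriv S(3))
  with True show ?thesis by simp
next
  case False
  define h where "h = from_nat_into I"
  have h: "bij_betw h UNIV I"
    unfolding h_def using bij_betw_from_nat_into[OF I False] .
  then have hI: "h n \<in> I" for n
    by (auto simp: bij_betw_def)
  have sums: "(\<lambda>n. F (h n) z) sums (\<Sum>\<^sub>\<infinity>i\<in>I. F i z)" if "z \<in> S" for z
    by (rule sums_infsum_reindex[OF h summable_on_dominated[OF bound(2)]]) (use bound(1) that in auto)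
  have sums': "(\<lambda>n. F' (h n) y) sums (\<Sum>\<^sub>\<infinity>i\<in>I. F' i y)"
    by (rule sums_infsum_reindex[OF h summable_on_dominated[OF bound'(2)]]) (use bound'(1) S(3) in auto)
  have "summable (\<lambda>n. M' (h n))"
    using sums_infsum_reindex[OF h bound'(2)] sums_summable by blast
  then have unif: "uniformly_convergent_on S (\<lambda>n z. \<Sum>i<n. F' (h i) z)"
    by (rule Weierstrass_m_test'[rotated]) (use bound'(1) hI in auto)
  have "((\<lambda>z. \<Sum>n. F (h n) z) has_real_derivative (\<Sum>n. F' (h n) y)) (at y)"
  proof (rule has_field_derivative_series'(2)[OF S(2) _ unif S(3)])
    show "(F (h n) has_real_derivative F' (h n) z) (at z within S)" if "z \<in> S" for n z
      using deriv[OF hI that] by (rule has_field_derivative_at_within)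
    show "summable (\<lambda>n. F (h n) y)"
      using sums[OF S(3)] sums_summable by blast
    show "y \<in> interior S"
      using S by (simp add: interior_open)
  qed
  then have "((\<lambda>z. \<Sum>n. F (h n) z) has_real_derivative (\<Sum>\<^sub>\<infinity>i\<in>I. F' i y)) (at y)"
    using sums' sums_unique by metis
  then show ?thesis
    by (rule has_field_derivative_transform_within_open[OF _ S(1) S(3)])
       (use sums sums_unique in metis)
qed

section \<open>A summable majorant on the integer lattice\<close>

definition exp_neg_l1 :: "int \<times> int \<Rightarrow> real" where
  "exp_neg_l1 p = exp (- (\<bar>real_of_int (fst p)\<bar> + \<bar>real_of_int (snd p)\<bar>))"

lemma exp_neg_l1_nonneg: "0 \<le> exp_neg_l1 p"
  by (simp add: exp_neg_l1_def)

lemma exp_minus_one_le_half: "exp (-1::real) \<le> 1/2"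
  using exp_ge_add_one_self[of 1] by (simp add: exp_minus field_simps)

lemma sum_exp_neg_abs_le:
  "(\<Sum>k\<in>{-int n..int n}. exp (- \<bar>real_of_int k\<bar>)) \<le> 3 - 4 * exp (- real (Suc n))"
proof (induction n)
  case 0
  then show ?case using exp_minus_one_le_half by simp
next
  case (Suc n)
  have "{-int (Suc n)..int (Suc n)} = insert (int (Suc n)) (insert (-int (Suc n)) {-int n..int n})"
    by auto
  then have "(\<Sum>k\<in>{-int (Suc n)..int (Suc n)}. exp (- \<bar>real_of_int k\<bar>))
      = 2 * exp (- real (Suc n)) + (\<Sum>k\<in>{-int n..int n}. exp (- \<bar>real_of_int k\<bar>))"
    by simp
  also have "\<dots> \<le> 3 - 2 * exp (- real (Suc n))"
    using Suc by simp
  also have "\<dots> \<le> 3 - 4 * exp (- real (Suc (Suc n)))"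
    using mult_right_mono[OF exp_minus_one_le_half, of "exp (- real (Suc n))"]
    by (simp add: exp_add[symmetric])
  finally show ?case .
qed

lemma sum_exp_neg_l1_le:
  assumes "finite F"
  shows "sum exp_neg_l1 F \<le> 9"
proof -
  define n where "n = Max (insert 0 ((\<lambda>p. nat \<bar>fst p\<bar> + nat \<bar>snd p\<bar>) ` F))"
  have "\<forall>p\<in>F. nat \<bar>fst p\<bar> + nat \<bar>snd p\<bar> \<le> n"
    unfolding n_def using assms by (auto intro: Max_ge)
  then have box: "F \<subseteq> {-int n..int n} \<times> {-int n..int n}"
    by fastforce
  have row: "(\<Sum>k\<in>{-int n..int n}. exp (- \<bar>real_of_int k\<bar>)) \<le> 3"
    using sum_exp_neg_abs_le[of n] by (smt (verit) exp_gt_zero)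
  have "sum exp_neg_l1 F \<le> sum exp_neg_l1 ({-int n..int n} \<times> {-int n..int n})"
    by (rule sum_mono2[OF _ box]) (auto simp: exp_neg_l1_nonneg)
  also have "\<dots> = (\<Sum>k\<in>{-int n..int n}. exp (- \<bar>real_of_int k\<bar>))
                 * (\<Sum>l\<in>{-int n..int n}. exp (- \<bar>real_of_int l\<bar>))"
    unfolding exp_neg_l1_def
    by (simp add: sum_product sum.cartesian_product exp_add[symmetric] split_def)
  also have "\<dots> \<le> 3 * 3"
    using row by (intro mult_mono) (auto intro: sum_nonneg)
  finally show ?thesis by simp
qed

lemma summable_on_exp_neg_l1: "exp_neg_l1 summable_on A"
proof -
  have "exp_neg_l1 summable_on UNIV"
    by (rule nonneg_bdd_above_summable_on)
       (auto simp: exp_neg_l1_nonneg bdd_above_def intro!: exI[of _ 9] sum_exp_neg_l1_le)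
  then show ?thesis
    using summable_on_subset_banach by blast
qed

lemma infsum_exp_neg_l1_le: "(\<Sum>\<^sub>\<infinity>p\<in>A. exp_neg_l1 p) \<le> 9"
  by (rule infsum_le_finite_sums[OF summable_on_exp_neg_l1]) (simp add: sum_exp_neg_l1_le)

section \<open>The summands and their derivatives\<close>

definition qform :: "real \<Rightarrow> real \<Rightarrow> real \<Rightarrow> real" where
  "qform K L y = (K + L/2)^2 / y + y * L^2"

definition qform_deriv :: "real \<Rightarrow> real \<Rightarrow> real \<Rightarrow> real" where
  "qform_deriv K L y = L^2 - (K + L/2)^2 / y^2"

definition qform_deriv2 :: "real \<Rightarrow> real \<Rightarrow> real \<Rightarrow> real" where
  "qform_deriv2 K L y = 2 * (K + L/2)^2 / y^3"

definition phase :: "real \<Rightarrow> real \<Rightarrow> real \<Rightarrow> real" where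
  "phase K L y = 2 * pi * (K * a2 y - L * a1 y)"

definition phase_deriv :: "real \<Rightarrow> real \<Rightarrow> real \<Rightarrow> real" where
  "phase_deriv K L y = pi * (2*K + L) / (4 * y^3)"

definition phase_deriv2 :: "real \<Rightarrow> real \<Rightarrow> real \<Rightarrow> real" where
  "phase_deriv2 K L y = - 3 * pi * (2*K + L) / (4 * y^4)"

definition summand :: "real \<Rightarrow> real \<Rightarrow> real \<Rightarrow> real \<Rightarrow> real" where
  "summand x K L y = exp (- x * qform K L y) * cos (phase K L y)"

definition summand_deriv :: "real \<Rightarrow> real \<Rightarrow> real \<Rightarrow> real \<Rightarrow> real" where
  "summand_deriv x K L y = exp (- x * qform K L y)
     * (- x * qform_deriv K L y * cos (phase K L y) - phase_deriv K L y * sin (phase K L y))"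

definition summand_deriv2 :: "real \<Rightarrow> real \<Rightarrow> real \<Rightarrow> real \<Rightarrow> real" where
  "summand_deriv2 x K L y = exp (- x * qform K L y)
     * (((x * qform_deriv K L y)^2 - x * qform_deriv2 K L y - phase_deriv K L y ^ 2) * cos (phase K L y)
        + (2 * x * qform_deriv K L y * phase_deriv K L y - phase_deriv2 K L y) * sin (phase K L y))"

context
  fixes y :: real
  assumes y: "y \<noteq> 0"
begin

lemma has_real_derivative_qform: "(qform K L has_real_derivative qform_deriv K L y) (at y)"
  unfolding qform_def qform_deriv_def using y
  by (auto intro!: derivative_eq_intros simp: field_simps power2_eq_square)

lemma has_real_derivative_qform_deriv: "(qform_deriv K L has_real_derivative qform_deriv2 K L y) (at y)"
  unfolding qform_deriv_def qform_deriv2_def using y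
  by (auto intro!: derivative_eq_intros simp: field_simps power2_eq_square power3_eq_cube)

lemma has_real_derivative_phase: "(phase K L has_real_derivative phase_deriv K L y) (at y)"
  unfolding phase_def phase_deriv_def a1_def a2_def using y
  by (auto intro!: derivative_eq_intros simp: field_simps power2_eq_square power3_eq_cube)

lemma has_real_derivative_phase_deriv: "(phase_deriv K L has_real_derivative phase_deriv2 K L y) (at y)"
  unfolding phase_deriv_def phase_deriv2_def using y
  by (auto intro!: derivative_eq_intros simp: field_simps eval_nat_numeral)

lemma has_real_derivative_summand: "(summand x K L has_real_derivative summand_deriv x K L y) (at y)"
  unfolding summand_def summand_deriv_def
  by (auto intro!: derivative_eq_intros has_real_derivative_qform has_real_derivative_phase
      simp: field_simps)

lemma has_real_derivative_summand_deriv: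
  "(summand_deriv x K L has_real_derivative summand_deriv2 x K L y) (at y)"
  unfolding summand_deriv_def summand_deriv2_def
  by (auto intro!: derivative_eq_intros has_real_derivative_qform has_real_derivative_phase
      has_real_derivative_qform_deriv has_real_derivative_phase_deriv
      simp: field_simps power2_eq_square)

end

lemma g_eq_infsum_summand:
  "g \<alpha> y = (\<Sum>\<^sub>\<infinity>p. summand (pi * \<alpha>) (real_of_int (fst p)) (real_of_int (snd p)) y)"
proof -
  have "- (pi * \<alpha> / y) * (K^2 + K * L + (1/4 + y^2) * L^2) = - (pi * \<alpha>) * qform K L y"
    for K L :: real
    by (cases "y = 0") (simp_all add: qform_def field_simps power2_eq_square)
  then show ?thesis
    unfolding g_def summand_def phase_def by (simp add: split_def)
qed

section \<open>Domination and the second derivative for 4/5 \<le> y \<le> 21/20\<close>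

lemma abs_le_square_of_int: "\<bar>real_of_int k\<bar> \<le> (real_of_int k)^2"
proof -
  have "\<bar>k\<bar> * 1 \<le> \<bar>k\<bar> * \<bar>k\<bar>" if "k \<noteq> 0"
    using that by (intro mult_left_mono) auto
  then have "\<bar>k\<bar> \<le> k^2"
    by (cases "k = 0") (auto simp: power2_eq_square abs_mult[symmetric])
  then show ?thesis
    by (metis of_int_abs of_int_le_iff of_int_power)
qed

lemma abs_mult_cos_add_mult_sin_le:
  fixes a b t :: real
  shows "\<bar>a * cos t + b * sin t\<bar> \<le> \<bar>a\<bar> + \<bar>b\<bar>"
proof -
  have "\<bar>a * cos t\<bar> \<le> \<bar>a\<bar>" "\<bar>b * sin t\<bar> \<le> \<bar>b\<bar>"
    by (auto simp: abs_mult intro!: mult_left_le)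
  then show ?thesis by linarith
qed

lemma exp_mult_quadratic_le:
  fixes x R a b c :: real
  assumes x: "4 \<le> x" and R: "D/3 \<le> R" "0 \<le> R" and abc: "0 \<le> a" "0 \<le> b" "0 \<le> c"
  shows "exp (- x * R) * (a + b * R + c * R^2) \<le> (a + b + 2*c) * exp (- D)"
proof -
  have "R \<le> exp R" "R^2 \<le> 2 * exp R"
    using R exp_ge_add_one_self[of R] exp_lower_Taylor_quadratic[OF R(2)] by linarith+
  then have "a * 1 \<le> a * exp R" "b * R \<le> b * exp R" "c * R^2 \<le> c * (2 * exp R)"
    using abc R by (intro mult_left_mono; simp)+
  then have "a + b * R + c * R^2 \<le> (a + b + 2*c) * exp R"
    by (simp add: algebra_simps)
  then have "exp (- x * R) * (a + b * R + c * R^2) \<le> exp (- x * R) * ((a + b + 2*c) * exp R)"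
    by (rule mult_left_mono) simp
  also have "\<dots> = (a + b + 2*c) * exp (- (x - 1) * R)"
    by (simp add: algebra_simps exp_add[symmetric])
  also have "\<dots> \<le> (a + b + 2*c) * exp (- D)"
  proof -
    have "D \<le> 3 * R" using R by simp
    also have "\<dots> \<le> (x - 1) * R" using x R by (intro mult_right_mono) auto
    finally show ?thesis using abc by (intro mult_left_mono) (auto simp: algebra_simps)
  qed
  finally show ?thesis .
qed

lemma qform_nonneg: "0 < y \<Longrightarrow> 0 \<le> qform K L y"
  unfolding qform_def by simp

lemma qform_deriv2_nonneg: "0 < y \<Longrightarrow> 0 \<le> qform_deriv2 K L y"
  unfolding qform_deriv2_def by simp

context
  fixes y :: real
  assumes y: "4/5 \<le> y" "y \<le> 21/20"
begin

lemma qform_ge_sum_squares: "(K^2 + L^2) / 3 \<le> qform K L y"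
proof -
  have "(K + L/2)^2 * y \<le> (K + L/2)^2 * (21/20)"
    using y by (intro mult_left_mono) auto
  then have "(20/21) * (K + L/2)^2 \<le> (K + L/2)^2 / y"
    using y by (simp add: field_simps)
  moreover have "(4/5) * L^2 \<le> y * L^2"
    using y by (intro mult_right_mono) auto
  moreover have "(20/21) * (K + L/2)^2 + (4/5) * L^2 - (K^2 + L^2) / 3
      = (13/21) * (K + 10/13 * L)^2 + (74/105 - 100/273) * L^2"
    by (simp add: power2_eq_square field_simps)
  moreover have "0 \<le> (13/21) * (K + 10/13 * L)^2 + (74/105 - 100/273) * L^2"
    by simp
  ultimately show ?thesis
    unfolding qform_def by linarith
qed

lemma qform_ge_l1: "(\<bar>real_of_int k\<bar> + \<bar>real_of_int l\<bar>) / 3 \<le> qform k l y"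
proof -
  have "\<bar>real_of_int k\<bar> + \<bar>real_of_int l\<bar> \<le> (real_of_int k)^2 + (real_of_int l)^2"
    using abs_le_square_of_int[of k] abs_le_square_of_int[of l] by linarith
  then show ?thesis
    using qform_ge_sum_squares[of k l] by (simp add: divide_right_mono order_trans)
qed

lemma divide_power_le: "0 \<le> a \<Longrightarrow> a / y^Suc n \<le> (5/4)^n * (a / y)"
proof -
  assume a: "0 \<le> a"
  have "1/y \<le> 5/4" "0 \<le> 1/y"
    using y by (simp_all add: field_simps)
  then have "(1/y)^n * (a / y) \<le> (5/4)^n * (a / y)"
    using a y by (intro mult_right_mono power_mono) auto
  then show ?thesis
    by (simp add: power_one_over field_simps)
qed

lemma divide_power_le_numerals:
  assumes "0 \<le> a"
  shows "a / y^2 \<le> 5/4 * (a / y)" "a / y^3 \<le> 25/16 * (a / y)" "a / y^4 \<le> 125/64 * (a / y)"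
  using divide_power_le[OF assms, of 1] divide_power_le[OF assms, of 2] divide_power_le[OF assms, of 3]
  by (simp_all add: eval_nat_numeral)

lemma qform_summands_nonneg: "0 \<le> (K + L/2)^2 / y" "0 \<le> y * L^2"
  using y by simp_all

lemma abs_qform_deriv_le: "\<bar>qform_deriv K L y\<bar> \<le> 2 * qform K L y"
proof -
  have "L^2 \<le> (5/4) * (y * L^2)"
    using y mult_right_mono[of 1 "(5/4) * y" "L^2"] by simp
  moreover have "(K + L/2)^2 / y^2 \<le> 5/4 * ((K + L/2)^2 / y)"
    by (rule divide_power_le_numerals(1)) simp
  moreover have "0 \<le> (K + L/2)^2 / y^2" "0 \<le> L^2"
    by simp_all
  ultimately show ?thesis
    using qform_summands_nonneg(1)[of K L] qform_summands_nonneg(2)[of L]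
    unfolding qform_deriv_def qform_def abs_le_iff distrib_left
    by (intro conjI) linarith+
qed

lemma qform_deriv2_le: "qform_deriv2 K L y \<le> 4 * qform K L y"
proof -
  have "qform_deriv2 K L y = 2 * ((K + L/2)^2 / y^3)"
    unfolding qform_deriv2_def by simp
  then show ?thesis
    using divide_power_le_numerals(2)[of "(K + L/2)^2"]
      qform_summands_nonneg(1)[of K L] qform_summands_nonneg(2)[of L]
    unfolding qform_def by simp
qed

context
  fixes K L :: real
  assumes int: "\<bar>2*K + L\<bar> \<le> (2*K + L)^2"
begin

lemma abs_phase_deriv_le: "\<bar>phase_deriv K L y\<bar> \<le> 8 * qform K L y"
proof -
  have "\<bar>phase_deriv K L y\<bar> = pi * \<bar>2*K + L\<bar> / (4 * y^3)"
    unfolding phase_deriv_def using y by (simp add: abs_mult)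
  also have "\<dots> \<le> pi * (2*K + L)^2 / (4 * y^3)"
    using int y by (simp add: divide_right_mono)
  also have "\<dots> = pi * ((K + L/2)^2 / y^3)"
    by (simp add: power2_eq_square field_simps)
  also have "\<dots> \<le> 4 * (25/16 * ((K + L/2)^2 / y))"
    using divide_power_le_numerals(2)[of "(K + L/2)^2"] pi_less_4 y by (intro mult_mono) auto
  also have "\<dots> \<le> 8 * qform K L y"
    using qform_summands_nonneg(1)[of K L] qform_summands_nonneg(2)[of L] unfolding qform_def by simp
  finally show ?thesis .
qed

lemma abs_phase_deriv2_le: "\<bar>phase_deriv2 K L y\<bar> \<le> 24 * qform K L y"
proof -
  have "\<bar>phase_deriv2 K L y\<bar> = 3 * pi * \<bar>2*K + L\<bar> / (4 * y^4)"
    unfolding phase_deriv2_def using y by (simp add: abs_mult)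
  also have "\<dots> \<le> 3 * pi * (2*K + L)^2 / (4 * y^4)"
    using int y by (simp add: divide_right_mono)
  also have "\<dots> = 3 * pi * ((K + L/2)^2 / y^4)"
    by (simp add: power2_eq_square field_simps)
  also have "\<dots> \<le> 12 * (125/64 * ((K + L/2)^2 / y))"
    using divide_power_le_numerals(3)[of "(K + L/2)^2"] pi_less_4 y by (intro mult_mono) auto
  also have "\<dots> \<le> 24 * qform K L y"
    using qform_summands_nonneg(1)[of K L] qform_summands_nonneg(2)[of L] unfolding qform_def by simp
  finally show ?thesis .
qed

end

end

lemma abs_summand_le: "\<bar>summand x K L y\<bar> \<le> exp (- x * qform K L y)"
  unfolding summand_def by (simp add: abs_mult mult_left_le)

lemma abs_le_square_of_int_lincomb:
  "\<bar>2 * real_of_int k + real_of_int l\<bar> \<le> (2 * real_of_int k + real_of_int l)^2"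
  using abs_le_square_of_int[of "2*k + l"] by simp

context
  fixes y x :: real and k l :: int
  assumes y: "4/5 \<le> y" "y \<le> 21/20" and x: "0 \<le> x"
begin

lemma abs_summand_deriv_le:
  "\<bar>summand_deriv x k l y\<bar> \<le> exp (- x * qform k l y) * ((2*x + 8) * qform k l y)"
proof -
  have "\<bar>- x * qform_deriv k l y * cos (phase k l y) - phase_deriv k l y * sin (phase k l y)\<bar>
      \<le> x * \<bar>qform_deriv k l y\<bar> + \<bar>phase_deriv k l y\<bar>"
    using abs_mult_cos_add_mult_sin_le[where a = "- x * qform_deriv k l y" and b = "- phase_deriv k l y"] x
    by (simp add: abs_mult)
  also have "\<dots> \<le> x * (2 * qform k l y) + 8 * qform k l y"
    using abs_qform_deriv_le[OF y] abs_phase_deriv_le[OF y abs_le_square_of_int_lincomb] x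
    by (intro add_mono mult_left_mono) auto
  also have "\<dots> = (2*x + 8) * qform k l y"
    by (simp add: algebra_simps)
  finally show ?thesis
    unfolding summand_deriv_def abs_mult by (simp add: mult_left_mono)
qed

lemma abs_summand_deriv2_le:
  "\<bar>summand_deriv2 x k l y\<bar>
     \<le> exp (- x * qform k l y) * ((4*x + 24) * qform k l y + ((2*x + 8) * qform k l y)^2)"
proof -
  define R where "R = qform k l y"
  define Q1 where "Q1 = qform_deriv k l y"
  define Q2 where "Q2 = qform_deriv2 k l y"
  define P1 where "P1 = phase_deriv k l y"
  define P2 where "P2 = phase_deriv2 k l y"
  have R: "0 \<le> R"
    unfolding R_def using y qform_nonneg by simp
  have Q1: "\<bar>Q1\<bar> \<le> 2 * R" and Q2: "0 \<le> Q2" "Q2 \<le> 4 * R"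
    unfolding Q1_def Q2_def R_def
    using abs_qform_deriv_le[OF y] qform_deriv2_nonneg qform_deriv2_le[OF y] y by auto
  have P1: "\<bar>P1\<bar> \<le> 8 * R" and P2: "\<bar>P2\<bar> \<le> 24 * R"
    unfolding P1_def P2_def R_def
    using abs_phase_deriv_le[OF y abs_le_square_of_int_lincomb]
      abs_phase_deriv2_le[OF y abs_le_square_of_int_lincomb] by auto
  have "\<bar>x * Q1\<bar> \<le> 2 * x * R"
    using mult_left_mono[OF Q1 x] x by (simp add: abs_mult mult_ac)
  then have "(x * Q1)^2 \<le> (2 * x * R)^2" "P1^2 \<le> (8 * R)^2"
    using power_mono[OF _ abs_ge_zero, of _ _ 2] P1 by fastforce+
  moreover have "0 \<le> x * Q2" "x * Q2 \<le> x * (4 * R)"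
    using Q2 x by (simp_all add: mult_left_mono)
  moreover have "0 \<le> (x * Q1)^2" "0 \<le> P1^2"
    by simp_all
  ultimately have A: "\<bar>(x * Q1)^2 - x * Q2 - P1^2\<bar> \<le> (2 * x * R)^2 + x * (4 * R) + (8 * R)^2"
    unfolding abs_le_iff by (intro conjI) linarith+
  have "\<bar>Q1\<bar> * \<bar>P1\<bar> \<le> (2 * R) * (8 * R)"
    by (rule mult_mono[OF Q1 P1]) (use R in auto)
  then have "(2 * x) * (\<bar>Q1\<bar> * \<bar>P1\<bar>) \<le> (2 * x) * ((2 * R) * (8 * R))"
    using x by (intro mult_left_mono) auto
  moreover have "\<bar>2 * x * Q1 * P1\<bar> = (2 * x) * (\<bar>Q1\<bar> * \<bar>P1\<bar>)"
    using x by (simp add: abs_mult)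
  ultimately have "\<bar>2 * x * Q1 * P1\<bar> \<le> 2 * x * (2 * R) * (8 * R)"
    by (simp only: mult.assoc)
  then have B: "\<bar>2 * x * Q1 * P1 - P2\<bar> \<le> 2 * x * (2 * R) * (8 * R) + 24 * R"
    using P2 by linarith
  have "\<bar>((x * Q1)^2 - x * Q2 - P1^2) * cos (phase k l y)
          + (2 * x * Q1 * P1 - P2) * sin (phase k l y)\<bar>
      \<le> \<bar>(x * Q1)^2 - x * Q2 - P1^2\<bar> + \<bar>2 * x * Q1 * P1 - P2\<bar>"
    by (rule abs_mult_cos_add_mult_sin_le)
  also have "\<dots> \<le> ((2 * x * R)^2 + x * (4 * R) + (8 * R)^2) + (2 * x * (2 * R) * (8 * R) + 24 * R)"
    using A B by (rule add_mono)
  also have "\<dots> = (4*x + 24) * R + ((2*x + 8) * R)^2"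
    by (simp add: algebra_simps power2_eq_square)
  finally show ?thesis
    unfolding summand_deriv2_def R_def Q1_def Q2_def P1_def P2_def abs_mult
    by (simp add: mult_left_mono)
qed

end

context
  fixes x y :: real
  assumes x: "4 \<le> x" and y: "4/5 \<le> y" "y \<le> 21/20"
begin

lemma exp_qform_quadratic_le:
  assumes "0 \<le> a" "0 \<le> b" "0 \<le> c"
  shows "exp (- x * qform k l y) * (a + b * qform k l y + c * (qform k l y)^2)
           \<le> (a + b + 2*c) * exp_neg_l1 (k, l)"
  unfolding exp_neg_l1_def
  using exp_mult_quadratic_le[OF x qform_ge_l1[OF y] qform_nonneg assms] y by simp

lemma abs_summand_le_exp_neg_l1:
  "\<bar>summand x (real_of_int (fst p)) (real_of_int (snd p)) y\<bar> \<le> exp_neg_l1 p"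
proof -
  have "exp (- x * qform (fst p) (snd p) y) \<le> exp_neg_l1 p"
    using exp_qform_quadratic_le[of 1 0 0 "fst p" "snd p"] by simp
  with abs_summand_le show ?thesis
    by (rule order_trans)
qed

lemma abs_summand_deriv_le_exp_neg_l1:
  "\<bar>summand_deriv x (real_of_int (fst p)) (real_of_int (snd p)) y\<bar> \<le> (2*x + 8) * exp_neg_l1 p"
proof -
  have "\<bar>summand_deriv x (fst p) (snd p) y\<bar>
      \<le> exp (- x * qform (fst p) (snd p) y) * ((2*x + 8) * qform (fst p) (snd p) y)"
    by (rule abs_summand_deriv_le[OF y]) (use x in simp)
  also have "\<dots> \<le> (2*x + 8) * exp_neg_l1 p"
    using exp_qform_quadratic_le[of 0 "2*x + 8" 0 "fst p" "snd p"] x by simp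
  finally show ?thesis .
qed

lemma abs_summand_deriv2_le_exp_neg_l1:
  "\<bar>summand_deriv2 x (real_of_int (fst p)) (real_of_int (snd p)) y\<bar>
     \<le> ((4*x + 24) + 2 * (2*x + 8)^2) * exp_neg_l1 p"
proof -
  have "\<bar>summand_deriv2 x (fst p) (snd p) y\<bar>
      \<le> exp (- x * qform (fst p) (snd p) y)
        * ((4*x + 24) * qform (fst p) (snd p) y + ((2*x + 8) * qform (fst p) (snd p) y)^2)"
    by (rule abs_summand_deriv2_le[OF y]) (use x in simp)
  also have "\<dots> \<le> ((4*x + 24) + 2 * (2*x + 8)^2) * exp_neg_l1 p"
    using exp_qform_quadratic_le[of 0 "4*x + 24" "(2*x + 8)^2" "fst p" "snd p"] x
    by (simp add: power_mult_distrib)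
  finally show ?thesis .
qed

end

lemma deriv2_g_eq:
  assumes x: "4 \<le> pi * \<alpha>" and y: "4/5 < y" "y < 21/20"
  shows "deriv (deriv (g \<alpha>)) y
           = (\<Sum>\<^sub>\<infinity>p. summand_deriv2 (pi * \<alpha>) (real_of_int (fst p)) (real_of_int (snd p)) y)"
proof -
  define x where "x = pi * \<alpha>"
  define S :: "real set" where "S = {4/5<..<21/20}"
  have S: "open S" "convex S" "y \<in> S"
    unfolding S_def using y by auto
  have in_S: "4/5 \<le> z" "z \<le> 21/20" "z \<noteq> 0" if "z \<in> S" for z
    using that unfolding S_def by auto
  have countable: "countable (UNIV :: (int \<times> int) set)"
    by simp
  note majorants = summable_on_exp_neg_l1 summable_on_cmult_right[OF summable_on_exp_neg_l1]
  have deriv1: "(g \<alpha> has_real_derivative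
                  (\<Sum>\<^sub>\<infinity>p. summand_deriv x (real_of_int (fst p)) (real_of_int (snd p)) z)) (at z)"
    if "z \<in> S" for z
    unfolding g_eq_infsum_summand x_def[symmetric]
    by (rule has_real_derivative_infsum[OF countable S(1,2) that,
          where M = exp_neg_l1 and M' = "\<lambda>p. (2*x + 8) * exp_neg_l1 p"])
       (use in_S x x_def has_real_derivative_summand abs_summand_le_exp_neg_l1
          abs_summand_deriv_le_exp_neg_l1 majorants in auto)
  have deriv2: "((\<lambda>z. \<Sum>\<^sub>\<infinity>p. summand_deriv x (real_of_int (fst p)) (real_of_int (snd p)) z)
                  has_real_derivative
                  (\<Sum>\<^sub>\<infinity>p. summand_deriv2 x (real_of_int (fst p)) (real_of_int (snd p)) y)) (at y)"
    by (rule has_real_derivative_infsum[OF countable S,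
          where M = "\<lambda>p. (2*x + 8) * exp_neg_l1 p"
            and M' = "\<lambda>p. ((4*x + 24) + 2 * (2*x + 8)^2) * exp_neg_l1 p"])
       (use in_S x x_def has_real_derivative_summand_deriv abs_summand_deriv_le_exp_neg_l1
          abs_summand_deriv2_le_exp_neg_l1 majorants in auto)
  have "(deriv (g \<alpha>) has_real_derivative
          (\<Sum>\<^sub>\<infinity>p. summand_deriv2 x (real_of_int (fst p)) (real_of_int (snd p)) y)) (at y)"
    by (rule has_field_derivative_transform_within_open[OF deriv2 S(1,3)])
       (use deriv1 DERIV_imp_deriv in metis)
  then show ?thesis
    unfolding x_def by (rule DERIV_imp_deriv)
qed

section \<open>Sign of the second derivative for sqrt 3 / 2 \<le> y \<le> 1\<close>

(* The lattice points with k^2 + k l + l^2 <= 1. *)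
definition hexagon_points :: "(int \<times> int) set" where
  "hexagon_points = {(0,0), (1,0), (-1,0), (0,1), (0,-1), (-1,1), (1,-1)}"

lemma square_ge_of_abs_ge: "c \<le> \<bar>z\<bar> \<Longrightarrow> 0 \<le> c \<Longrightarrow> c^2 \<le> (z::int)^2"
  using power_mono[of c "\<bar>z\<bar>" 2] by simp

lemma outside_hexagon_points:
  assumes "(k, l) \<notin> hexagon_points"
  shows "12 \<le> (2*k + l)^2 + 3 * l^2"
proof -
  consider "2 \<le> \<bar>l\<bar>" | "4 \<le> \<bar>2*k + l\<bar>" | "\<bar>l\<bar> \<le> 1" "\<bar>2*k + l\<bar> \<le> 3"
    by linarith
  then show ?thesis
  proof cases
    case 1
    then have "4 \<le> l^2" using square_ge_of_abs_ge[of 2 l] by simp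
    then show ?thesis using zero_le_power2[of "2*k + l"] by linarith
  next
    case 2
    then have "16 \<le> (2*k + l)^2" using square_ge_of_abs_ge[of 4 "2*k + l"] by simp
    then show ?thesis using zero_le_power2[of l] by linarith
  next
    case 3
    then have "k \<in> {-2..2}" "l \<in> {-1..1}"
      by auto
    then have "k = -2 \<or> k = -1 \<or> k = 0 \<or> k = 1 \<or> k = 2" "l = -1 \<or> l = 0 \<or> l = 1"
      by auto
    then show ?thesis
      using assms unfolding hexagon_points_def by (elim disjE) simp_all
  qed
qed

context
  fixes y :: real
  assumes y: "0 < y" "3/4 \<le> y^2" "y \<le> 1"
begin

lemma six_sevenths_le: "6/7 \<le> y"
proof (rule power2_le_imp_le)
  show "(6/7)^2 \<le> y^2"
    using y(2) by (simp add: power2_eq_square)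
qed (use y in simp)

lemma qform_outside_hexagon_points_ge:
  assumes "(k, l) \<notin> hexagon_points"
  shows "3 \<le> qform k l y"
proof -
  define K L where "K = real_of_int k" and "L = real_of_int l"
  have "real_of_int 12 \<le> real_of_int ((2*k + l)^2 + 3 * l^2)"
    using outside_hexagon_points[OF assms] by (simp only: of_int_le_iff)
  then have int: "12 \<le> (2*K + L)^2 + 3 * L^2"
    unfolding K_def L_def by simp
  have "(3/4) * L^2 \<le> y * L^2"
    using six_sevenths_le by (intro mult_right_mono) auto
  moreover have "(2*K + L)^2 / 4 \<le> (K + L/2)^2 / y"
  proof -
    have "(K + L/2)^2 = (2*K + L)^2 / 4"
      by (simp add: power2_eq_square field_simps)
    moreover have "(2*K + L)^2 / 4 / 1 \<le> (2*K + L)^2 / 4 / y"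
      using y by (intro divide_left_mono) auto
    ultimately show ?thesis
      by simp
  qed
  ultimately show ?thesis
    using int unfolding qform_def K_def[symmetric] L_def[symmetric] by linarith
qed

end

lemma pi_squared_le_16: "pi^2 \<le> 16"
  using pi_less_4 pi_gt_zero power_mono[of pi 4 2] by simp

lemma axis_bracket_le:
  fixes x u v s :: real
  assumes x: "15 \<le> x" and u: "1 \<le> u" "u^2 \<le> 4/3" and v: "1/2 \<le> v" "v \<le> 1" and s: "0 \<le> s"
  shows "(2 * x * u^3 - x^2 * u^4) * v - x * pi * s * u^5 + 3 * pi * s * u^4 / 2 + pi^2 * v * u^6 / 4
           \<le> - (x^2 / 4)"
proof -
  have xu: "x \<le> x * u"
    using mult_left_mono[OF u(1), of x] x by simp
  have "x * (x - 2) \<le> (x * u^3) * (x * u - 2)"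
    using x u xu by (intro mult_mono) auto
  then have "x^2 - 2 * x \<le> x^2 * u^4 - 2 * x * u^3"
    by (simp add: algebra_simps eval_nat_numeral)
  moreover have "0 \<le> x^2 - 2 * x"
    using x mult_right_mono[OF x, of x] unfolding power2_eq_square by linarith
  ultimately have "(x^2 - 2 * x) * (1/2) \<le> (x^2 * u^4 - 2 * x * u^3) * v"
    using v by (intro mult_mono) linarith+
  then have central: "(2 * x * u^3 - x^2 * u^4) * v \<le> - ((x^2 - 2 * x) / 2)"
    by (simp add: field_simps)
  have "pi * s * u^4 * (3/2 - x * u) \<le> 0"
  proof (rule mult_nonneg_nonpos)
    show "0 \<le> pi * s * u^4" using s by simp
    show "3/2 - x * u \<le> 0" using x xu by linarith
  qed
  then have odd: "3 * pi * s * u^4 / 2 - x * pi * s * u^5 \<le> 0"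
    by (simp add: algebra_simps eval_nat_numeral)
  have "pi^2 * v * u^6 \<le> 16 * 1 * (4/3)^3"
  proof (intro mult_mono)
    show "pi^2 \<le> 16"
      by (rule pi_squared_le_16)
    show "u^6 \<le> (4/3)^3"
      using power_mono[OF u(2), of 3] by (simp flip: power_mult)
  qed (use v in auto)
  then have even: "pi^2 * v * u^6 / 4 \<le> 10"
    by (simp add: eval_nat_numeral)
  have "10 + x \<le> x^2 / 4"
    using x mult_right_mono[OF x, of x] unfolding power2_eq_square by linarith
  with central odd even show ?thesis
    by argo
qed

lemma phase_axis: "phase 1 0 y = pi - pi / (4 * y^2)" "phase (-1) 0 y = - (pi - pi / (4 * y^2))"
  unfolding phase_def a2_def by (simp_all add: field_simps)

lemma phase_deriv2_eq: "y \<noteq> 0 \<Longrightarrow> phase_deriv2 K L y = - (3 / y) * phase_deriv K L y"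
  unfolding phase_deriv2_def phase_deriv_def by (simp add: field_simps eval_nat_numeral)

lemma phase_neighbour:
  assumes KL: "(K, L) \<in> {(0,1), (0,-1), (-1,1), (1,-1)}" and y: "y \<noteq> 0"
  defines "h \<equiv> pi / (8 * y^2)"
  shows "cos (phase K L y) = - sin h \<and> sin (phase K L y) = - (2*K + L) * cos h"
proof -
  have "3 * pi / 2 = pi / 2 + pi"
    by simp
  then have three_halves_pi: "cos (3 * pi / 2) = 0" "sin (3 * pi / 2) = -1"
    by (simp_all only: cos_periodic_pi sin_periodic_pi) simp_all
  from KL consider "K = 0" "L = 1" | "K = 0" "L = -1" | "K = -1" "L = 1" | "K = 1" "L = -1"
    by auto
  then show ?thesis
  proof cases
    case 1
    then have "phase K L y = - (pi/2 + h)"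
      using y unfolding phase_def a1_def h_def by (simp add: field_simps)
    then show ?thesis using 1 three_halves_pi by (simp add: cos_add sin_add cos_diff sin_diff)
  next
    case 2
    then have "phase K L y = pi/2 + h"
      using y unfolding phase_def a1_def h_def by (simp add: field_simps)
    then show ?thesis using 2 three_halves_pi by (simp add: cos_add sin_add cos_diff sin_diff)
  next
    case 3
    then have "phase K L y = h - 3 * pi / 2"
      using y unfolding phase_def a1_def a2_def h_def by (simp add: field_simps)
    then show ?thesis using 3 three_halves_pi by (simp add: cos_add sin_add cos_diff sin_diff)
  next
    case 4
    then have "phase K L y = 3 * pi / 2 - h"
      using y unfolding phase_def a1_def a2_def h_def by (simp add: field_simps)
    then show ?thesis using 4 three_halves_pi by (simp add: cos_add sin_add cos_diff sin_diff)
  qed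
qed

lemma summand_deriv2_nonpos:
  assumes y: "0 < y" and Q1: "0 \<le> x * qform_deriv K L y"
    and dom: "phase_deriv K L y ^ 2 + x * qform_deriv2 K L y \<le> (x * qform_deriv K L y)^2"
    and cos: "cos (phase K L y) \<le> 0" and sin: "phase_deriv K L y * sin (phase K L y) \<le> 0"
  shows "summand_deriv2 x K L y \<le> 0"
proof -
  have "((x * qform_deriv K L y)^2 - x * qform_deriv2 K L y - phase_deriv K L y ^ 2) * cos (phase K L y) \<le> 0"
    using dom cos by (intro mult_nonneg_nonpos) auto
  moreover have "(2 * x * qform_deriv K L y * phase_deriv K L y - phase_deriv2 K L y) * sin (phase K L y)
      = (2 * (x * qform_deriv K L y) + 3 / y) * (phase_deriv K L y * sin (phase K L y))"
    using phase_deriv2_eq y by (simp add: algebra_simps)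
  moreover have "\<dots> \<le> 0"
    using Q1 y sin by (intro mult_nonneg_nonpos[OF _ sin]) auto
  ultimately show ?thesis
    unfolding summand_deriv2_def by (intro mult_nonneg_nonpos) auto
qed

context
  fixes x y :: real
  assumes x: "15 \<le> x" and y: "0 < y" "3/4 \<le> y^2" "y \<le> 1"
begin

lemma summand_deriv2_axis_le:
  assumes K: "K = 1 \<or> K = -1"
  shows "summand_deriv2 x K 0 y \<le> - (x^2 / 4) * exp (- x / y)"
proof -
  define u where "u = 1 / y"
  define v where "v = cos (pi / (4 * y^2))"
  define s where "s = sin (pi / (4 * y^2))"
  have arg: "0 \<le> pi / (4 * y^2)" "pi / (4 * y^2) \<le> pi / 3"
    using y by (auto simp: field_simps intro!: mult_left_mono[of _ _ pi])
  have "cos (pi / 3) \<le> v"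
    unfolding v_def by (rule cos_monotone_0_pi_le) (use arg in auto)
  then have v: "1/2 \<le> v" "v \<le> 1"
    by (simp_all add: cos_60 v_def)
  have s: "0 \<le> s"
    unfolding s_def by (rule sin_ge_zero) (use arg pi_gt_zero in linarith)+
  have u: "1 \<le> u" "u^2 \<le> 4/3"
    unfolding u_def using y by (simp_all add: field_simps power_one_over)
  have "summand_deriv2 x K 0 y
      = exp (- x * u) * ((2 * x * u^3 - x^2 * u^4) * v - x * pi * s * u^5 + 3 * pi * s * u^4 / 2
                        + pi^2 * v * u^6 / 4)"
  proof -
    have trig: "cos (phase K 0 y) = - v" "sin (phase K 0 y) = K * s"
      using K by (auto simp: phase_axis v_def s_def)
    show ?thesis
      unfolding summand_deriv2_def trig using K y unfolding u_def
      by (elim disjE) (simp_all add: qform_def qform_deriv_def qform_deriv2_def phase_deriv_def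
          phase_deriv2_def field_simps power2_eq_square eval_nat_numeral)
  qed
  also have "\<dots> \<le> exp (- x * u) * (- (x^2 / 4))"
    using axis_bracket_le[OF x u v s] by (intro mult_left_mono) auto
  finally show ?thesis
    by (simp add: u_def mult.commute)
qed

lemma summand_deriv2_neighbour_nonpos:
  assumes KL: "(K, L) \<in> {(0,1), (0,-1), (-1,1), (1,-1)}"
  shows "summand_deriv2 x K L y \<le> 0"
proof (rule summand_deriv2_nonpos[OF y(1)])
  have N: "(K + L/2)^2 = 1/4" "L^2 = 1" "(2*K + L)^2 = 1"
    using KL by (auto simp: power2_eq_square)
  have y34: "3/4 \<le> y"
    using six_sevenths_le[OF y] by simp
  have "1 / (4 * y^2) \<le> 1/3"
    using y by (simp add: field_simps)
  then have Q1: "2/3 \<le> qform_deriv K L y"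
    unfolding qform_deriv_def N by simp
  then show "0 \<le> x * qform_deriv K L y"
    using x by simp
  have "9/16 \<le> y * y^2"
    using y y34 mult_mono[OF y34 y(2)] by simp
  then have "qform_deriv2 K L y \<le> 1"
    unfolding qform_deriv2_def N using y by (simp add: field_simps eval_nat_numeral)
  then have "x * qform_deriv2 K L y \<le> x"
    using x mult_left_mono[of _ 1 x] by simp
  moreover have "phase_deriv K L y ^ 2 \<le> 3"
  proof -
    have "(3/4)^3 \<le> (y^2)^3"
      using y by (intro power_mono) auto
    with pi_squared_le_16 have "pi^2 / (16 * (y^2)^3) \<le> 16 / (16 * (3/4)^3)"
      by (intro frac_le) auto
    moreover have "phase_deriv K L y ^ 2 = pi^2 / (16 * (y^2)^3)"
      unfolding phase_deriv_def by (simp add: power_divide power_mult_distrib N flip: power_mult)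
    ultimately show ?thesis
      by (simp add: eval_nat_numeral)
  qed
  moreover have "x + 3 \<le> (x * qform_deriv K L y)^2"
  proof -
    have "x + 3 \<le> (x * (2/3))^2"
      using x mult_right_mono[OF x, of x] unfolding power_mult_distrib power2_eq_square by linarith
    also have "\<dots> \<le> (x * qform_deriv K L y)^2"
      using x Q1 by (intro power_mono mult_left_mono) auto
    finally show ?thesis .
  qed
  ultimately show "phase_deriv K L y ^ 2 + x * qform_deriv2 K L y \<le> (x * qform_deriv K L y)^2"
    by linarith
  define h where "h = pi / (8 * y^2)"
  have h: "0 \<le> h" "h \<le> pi / 2"
    unfolding h_def using y by (auto simp: field_simps intro!: mult_left_mono[of _ _ pi])
  have trig: "cos (phase K L y) = - sin h" "sin (phase K L y) = - (2*K + L) * cos h"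
    using phase_neighbour[OF KL] y unfolding h_def by auto
  show "cos (phase K L y) \<le> 0"
    unfolding trig using h by (simp add: sin_ge_zero)
  define c where "c = pi / (4 * y^3)"
  have "phase_deriv K L y = c * (2*K + L)"
    unfolding phase_deriv_def c_def by simp
  then have "phase_deriv K L y * sin (phase K L y) = - c * (2*K + L)^2 * cos h"
    unfolding trig by (simp add: power2_eq_square algebra_simps)
  also have "\<dots> = - c * cos h"
    using N(3) by simp
  finally show "phase_deriv K L y * sin (phase K L y) \<le> 0"
    using h y cos_ge_zero[of h] unfolding c_def by simp
qed

end

lemma exp_25_half_ge: "1600 \<le> exp (25/2 :: real)"
proof -
  have "53/8 \<le> exp (5/2 :: real)"
    using exp_lower_Taylor_quadratic[of "5/2"] by (simp add: power2_eq_square)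
  then have "(53/8)^5 \<le> exp (5/2 :: real) ^ 5"
    by (intro power_mono) auto
  also have "\<dots> = exp (25/2)"
    using exp_of_nat_mult[of 5 "5/2 :: real"] by simp
  finally show ?thesis
    by (simp add: eval_nat_numeral)
qed

lemma tail_polynomial_le:
  fixes x R :: real
  assumes x: "15 \<le> x" and R: "3 \<le> R"
  shows "(4*x + 24) * R + ((2*x + 8) * R)^2 \<le> 8 * x^2 * R^2"
proof -
  have "R * 3 \<le> R * R"
    using R by (intro mult_left_mono) auto
  then have "(4*x + 24) * R \<le> (4*x + 24) / 3 * R^2"
    using x mult_left_mono[of "R * 3" "R * R" "(4*x + 24) / 3"] by (simp add: power2_eq_square)
  moreover have "(4*x + 24) / 3 + (2*x + 8)^2 \<le> 8 * x^2"
  proof -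
    have "15 * x \<le> x * x"
      using x by (intro mult_right_mono) auto
    then have "216 + x * 100 \<le> x * (x * 12)"
      using x by linarith
    then show ?thesis
      by (simp add: power2_eq_square field_simps)
  qed
  then have "((4*x + 24) / 3 + (2*x + 8)^2) * R^2 \<le> 8 * x^2 * R^2"
    by (intro mult_right_mono) auto
  moreover have "((2*x + 8) * R)^2 = (2*x + 8)^2 * R^2"
    by (simp add: power_mult_distrib)
  ultimately show ?thesis
    unfolding distrib_right by linarith
qed

context
  fixes x y :: real
  assumes x: "15 \<le> x" and y: "0 < y" "3/4 \<le> y^2" "y \<le> 1"
begin

lemma exp_tail_le:
  assumes R: "3 \<le> R" and D: "D \<le> 3 * R"
  shows "exp (- x * R) * (8 * x^2 * R^2) \<le> x^2 / 100 * exp (- x / y) * exp (- D)"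
proof -
  have iy: "1/y \<le> 7/6"
    using six_sevenths_le[OF y] y by (simp add: field_simps)
  have "15 * (R - 1/y) \<le> x * (R - 1/y)"
    using x R iy by (intro mult_right_mono) auto
  then have e1: "- x * R \<le> - x / y - 15 * (R - 1/y)"
    by (simp add: algebra_simps)
  have e2: "R - x / y - 15 * (R - 1/y) \<le> - x / y - D - 25/2"
    using R D iy unfolding right_diff_distrib by linarith
  have "R^2 \<le> 2 * exp R"
    using exp_lower_Taylor_quadratic[of R] R by simp
  then have "exp (- x * R) * (8 * x^2 * R^2) \<le> exp (- x / y - 15 * (R - 1/y)) * (8 * x^2 * (2 * exp R))"
    using e1 by (intro mult_mono) auto
  also have "\<dots> = 16 * x^2 * exp (R - x / y - 15 * (R - 1/y))"
    by (simp add: exp_add[symmetric] algebra_simps)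
  also have "\<dots> \<le> 16 * x^2 * exp (- x / y - D - 25/2)"
    using e2 by (intro mult_left_mono) auto
  also have "\<dots> = 16 / exp (25/2) * x^2 * exp (- x / y) * exp (- D)"
    by (simp only: exp_diff exp_minus) (simp add: field_simps)
  also have "\<dots> \<le> 1/100 * x^2 * exp (- x / y) * exp (- D)"
    using exp_25_half_ge by (intro mult_right_mono) (auto simp: field_simps)
  finally show ?thesis
    by simp
qed

lemma abs_summand_deriv2_outside_le:
  assumes p: "p \<notin> hexagon_points"
  shows "\<bar>summand_deriv2 x (fst p) (snd p) y\<bar> \<le> x^2 / 100 * exp (- x / y) * exp_neg_l1 p"
proof -
  define R where "R = qform (fst p) (snd p) y"
  have y': "4/5 \<le> y" "y \<le> 21/20"
    using six_sevenths_le[OF y] y by auto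
  have R: "3 \<le> R"
    unfolding R_def using qform_outside_hexagon_points_ge[OF y] p by (cases p) auto
  have D: "\<bar>real_of_int (fst p)\<bar> + \<bar>real_of_int (snd p)\<bar> \<le> 3 * R"
    unfolding R_def using qform_ge_l1[OF y'] by (simp add: field_simps)
  have "\<bar>summand_deriv2 x (fst p) (snd p) y\<bar> \<le> exp (- x * R) * ((4*x + 24) * R + ((2*x + 8) * R)^2)"
    unfolding R_def by (rule abs_summand_deriv2_le[OF y']) (use x in simp)
  also have "\<dots> \<le> exp (- x * R) * (8 * x^2 * R^2)"
    using tail_polynomial_le[OF x R] by (intro mult_left_mono) auto
  also have "\<dots> \<le> x^2 / 100 * exp (- x / y) * exp_neg_l1 p"
    using exp_tail_le[OF R D] unfolding exp_neg_l1_def by simp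
  finally show ?thesis .
qed

lemma infsum_summand_deriv2_neg:
  "(\<Sum>\<^sub>\<infinity>p. summand_deriv2 x (real_of_int (fst p)) (real_of_int (snd p)) y) < 0"
proof -
  define f where "f p = summand_deriv2 x (real_of_int (fst p)) (real_of_int (snd p)) y" for p
  define c where "c = x^2 / 100 * exp (- x / y)"
  have y': "4/5 \<le> y" "y \<le> 21/20"
    using six_sevenths_le[OF y] y by auto
  have summable: "f summable_on A" for A
    unfolding f_def
    by (rule summable_on_dominated[OF summable_on_cmult_right[OF summable_on_exp_neg_l1,
              where c = "(4*x + 24) + 2 * (2*x + 8)^2"]])
       (use abs_summand_deriv2_le_exp_neg_l1[OF _ y'] x in auto)
  have "infsum f UNIV = infsum f hexagon_points + infsum f (UNIV - hexagon_points)"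
    using infsum_Un_disjoint[OF summable summable, of hexagon_points "UNIV - hexagon_points"] by simp
  also have "infsum f hexagon_points
      = f (0,0) + f (1,0) + f (-1,0) + f (0,1) + f (0,-1) + f (-1,1) + f (1,-1)"
    by (simp add: hexagon_points_def algebra_simps)
  also have "\<dots> \<le> 0 + 2 * (- (x^2 / 4) * exp (- x / y)) + 0"
  proof -
    have "f (0,0) = 0"
      unfolding f_def by (simp add: summand_deriv2_def qform_deriv_def qform_deriv2_def
          phase_deriv_def phase_deriv2_def)
    moreover have "f (1,0) \<le> - (x^2 / 4) * exp (- x / y)" "f (-1,0) \<le> - (x^2 / 4) * exp (- x / y)"
      unfolding f_def using summand_deriv2_axis_le[OF x y] by simp_all
    moreover have "f (0,1) \<le> 0" "f (0,-1) \<le> 0" "f (-1,1) \<le> 0" "f (1,-1) \<le> 0"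
      unfolding f_def using summand_deriv2_neighbour_nonpos[OF x y] by simp_all
    ultimately show ?thesis
      by linarith
  qed
  also have "infsum f (UNIV - hexagon_points) \<le> 9 * c"
  proof -
    have "infsum f (UNIV - hexagon_points) \<le> (\<Sum>\<^sub>\<infinity>p\<in>UNIV - hexagon_points. c * exp_neg_l1 p)"
    proof (rule infsum_mono[OF summable summable_on_cmult_right[OF summable_on_exp_neg_l1]])
      fix p
      assume "p \<in> UNIV - hexagon_points"
      then show "f p \<le> c * exp_neg_l1 p"
        using abs_summand_deriv2_outside_le[of p] unfolding f_def c_def by (simp add: abs_le_iff)
    qed
    also have "\<dots> = c * (\<Sum>\<^sub>\<infinity>p\<in>UNIV - hexagon_points. exp_neg_l1 p)"
      by (rule infsum_cmult_right) (rule summable_on_exp_neg_l1)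
    also have "\<dots> \<le> c * 9"
      using infsum_exp_neg_l1_le by (intro mult_left_mono) (auto simp: c_def)
    finally show ?thesis
      by simp
  qed
  finally have "infsum f UNIV \<le> - (41/100) * (x^2 * exp (- x / y))"
    by (simp add: c_def algebra_simps)
  also have "\<dots> < 0"
    using x by simp
  finally show ?thesis
    unfolding f_def .
qed

end

theorem mainTheorem19:
  fixes \<alpha> y :: real
  assumes "\<alpha> \<ge> 5"
    and "sqrt 3 / 2 \<le> y" and "y \<le> sqrt 3 / 2 + 1 / (4 * sqrt \<alpha>)"
  shows "deriv (deriv (g \<alpha>)) y < 0"
proof -
  have x: "15 \<le> pi * \<alpha>"
    using mult_mono[of 3 pi 5 \<alpha>] assms(1) pi_gt3 by simp
  have y_pos: "0 < y"
    using assms(2) real_sqrt_gt_zero[of 3] by linarith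
  have y_sq: "3/4 \<le> y^2"
    using power_mono[OF assms(2), of 2] by (simp add: power_divide)
  have "sqrt 3 \<le> 7/4"
    by (rule real_le_lsqrt) (auto simp: power2_eq_square)
  moreover have "1 / (4 * sqrt \<alpha>) \<le> 1 / (4 * 2)"
    using real_le_rsqrt[of 2 \<alpha>] assms(1) by (intro divide_left_mono) auto
  ultimately have y_le: "y \<le> 1"
    using assms(3) by linarith
  have "deriv (deriv (g \<alpha>)) y
      = (\<Sum>\<^sub>\<infinity>p. summand_deriv2 (pi * \<alpha>) (real_of_int (fst p)) (real_of_int (snd p)) y)"
    using six_sevenths_le[OF y_pos y_sq y_le] y_le x by (intro deriv2_g_eq) auto
  also have "\<dots> < 0"
    by (rule infsum_summand_deriv2_neg[OF x y_pos y_sq y_le])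
  finally show ?thesis .
qed

end
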